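(* Let $G_{\mathrm{base}}$ be a forest on $L$ vertices with edge weights $W$, and let $f(z) = \exp(\tau(z))$ where $\tau(z) = az+b$ is an affine map ($a,b\in\mathbb{R}$). Then the mask $\mathbf{M} = [f(\mathrm{dist}_{G_{\mathrm{base}}}(i,j))]_{i,j=1,\dots,L}$ supports matrix-vector multiplication in time $O(L)$; in particular $(G_{\mathrm{base}},f)$ is tractable.
   Context: $\mathrm{dist}_{G_{\mathrm{base}}}(i,j)$ is the weighted shortest-path distance (sum of edge weights along the unique path) between $i$ and $j$. For vertices in different connected components of the forest the corresponding mask entries are taken to be $0$. A pair $(G_{\mathrm{base}},f)$ is tractable if $\mathbf{M}\mathbf{x}$ can be computed in $o(L^2)$ time for every $\mathbf{x}\in\mathbb{R}^L$. Time counts arithmetic operations, including evaluations of $\exp$. *)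

theory Defs
  imports Complex_Main
begin

definition walk_ok :: "nat set set \<Rightarrow> nat list \<Rightarrow> bool" where
  "walk_ok E p \<longleftrightarrow> (\<forall>k. Suc k < length p \<longrightarrow> {p ! k, p ! Suc k} \<in> E)"

definition is_path :: "nat set set \<Rightarrow> nat list \<Rightarrow> nat \<Rightarrow> nat \<Rightarrow> bool" where
  "is_path E p i j \<longleftrightarrow> p \<noteq> [] \<and> hd p = i \<and> last p = j \<and> distinct p \<and> walk_ok E p"

definition has_cycle :: "nat set set \<Rightarrow> bool" where
  "has_cycle E \<longleftrightarrow> (\<exists>c. length c \<ge> 3 \<and> distinct c \<and> walk_ok E c \<and> {last c, hd c} \<in> E)"

definition forest :: "nat \<Rightarrow> nat set set \<Rightarrow> bool" where
  "forest L E \<longleftrightarrow>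
     (\<forall>e\<in>E. \<exists>u v. e = {u, v} \<and> u \<noteq> v \<and> u < L \<and> v < L) \<and> \<not> has_cycle E"

definition path_weight :: "(nat set \<Rightarrow> real) \<Rightarrow> nat list \<Rightarrow> real" where
  "path_weight W p = (\<Sum>k<length p - 1. W {p ! k, p ! Suc k})"

text \<open>Weighted distance: weight of the unique simple path (forest).\<close>
definition fdist :: "nat set set \<Rightarrow> (nat set \<Rightarrow> real) \<Rightarrow> nat \<Rightarrow> nat \<Rightarrow> real" where
  "fdist E W i j = path_weight W (THE p. is_path E p i j)"

definition mask :: "real \<Rightarrow> real \<Rightarrow> nat set set \<Rightarrow> (nat set \<Rightarrow> real) \<Rightarrow> nat \<Rightarrow> nat \<Rightarrow> real" where
  "mask a b E W i j = (if \<exists>p. is_path E p i j then exp (a * fdist E W i j + b) else 0)"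

definition mask_mult :: "real \<Rightarrow> real \<Rightarrow> nat \<Rightarrow> nat set set \<Rightarrow> (nat set \<Rightarrow> real) \<Rightarrow> (nat \<Rightarrow> real) \<Rightarrow> nat \<Rightarrow> real" where
  "mask_mult a b L E W x i = (\<Sum>j<L. mask a b E W i j * x j)"

section \<open>Arithmetic straight-line programs (cost model: one unit per operation)\<close>

datatype instr =
    Const real
  | InX nat
  | InW "nat set"
  | Add nat nat
  | Sub nat nat
  | Mul nat nat
  | Dv nat nat
  | Ex nat

definition reg :: "real list \<Rightarrow> nat \<Rightarrow> real" where
  "reg rs k = (if k < length rs then rs ! k else 0)"

fun exec_instr :: "(nat \<Rightarrow> real) \<Rightarrow> (nat set \<Rightarrow> real) \<Rightarrow> real list \<Rightarrow> instr \<Rightarrow> real" where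
  "exec_instr x W rs (Const c) = c"
| "exec_instr x W rs (InX i) = x i"
| "exec_instr x W rs (InW e) = W e"
| "exec_instr x W rs (Add k l) = reg rs k + reg rs l"
| "exec_instr x W rs (Sub k l) = reg rs k - reg rs l"
| "exec_instr x W rs (Mul k l) = reg rs k * reg rs l"
| "exec_instr x W rs (Dv k l) = reg rs k / reg rs l"
| "exec_instr x W rs (Ex k) = exp (reg rs k)"

definition run :: "instr list \<Rightarrow> (nat \<Rightarrow> real) \<Rightarrow> (nat set \<Rightarrow> real) \<Rightarrow> real list" where
  "run P x W = foldl (\<lambda>rs ins. rs @ [exec_instr x W rs ins]) [] P"

definition computes_mask_mult ::
  "real \<Rightarrow> real \<Rightarrow> nat \<Rightarrow> nat set set \<Rightarrow> instr list \<Rightarrow> nat list \<Rightarrow> bool" where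
  "computes_mask_mult a b L E P outs \<longleftrightarrow> length outs = L \<and>
     (\<forall>W x. \<forall>i<L. reg (run P x W) (outs ! i) = mask_mult a b L E W x i)"

end

theory Submission
  imports Defs
begin

(*
  Let l be a pendant vertex of the forest with neighbour p, and c = exp (a W{l,p}). Every path
  ending in l is a path ending in p followed by the edge {p,l}, and f = exp o tau turns sums of
  weights into products; so off the diagonal the row and column of l in the mask are c times
  those of p in the mask M' of the pruned forest, and all other entries of M and M' agree.
  Hence M x is read off from y' = M' x', where x' adds c x_l to x_p:
  y_l = c y'_p + e^b (1 - c^2) x_l and y_i = y'_i for i <> l. Peeling pendant vertices one at a
  time costs a constant number of arithmetic operations per edge, and the edgeless forest, whose
  mask is e^b times the identity, costs one multiplication per vertex.
*)

section \<open>Walks and paths\<close>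

lemma walk_ok_mono: "walk_ok E q \<Longrightarrow> E \<subseteq> F \<Longrightarrow> walk_ok F q"
  unfolding walk_ok_def by blast

lemma walk_ok_short: "length q \<le> 1 \<Longrightarrow> walk_ok E q"
  unfolding walk_ok_def by auto

lemma walk_ok_drop: "walk_ok E q \<Longrightarrow> walk_ok E (drop m q)"
  unfolding walk_ok_def by auto

lemma walk_ok_snoc_iff:
  "walk_ok E (q @ [v]) \<longleftrightarrow> walk_ok E q \<and> (q \<noteq> [] \<longrightarrow> {last q, v} \<in> E)"
proof (cases "q = []")
  case False
  define n where "n = length q - 1"
  have n: "length q = Suc n" using False by (simp add: n_def)
  have "(\<forall>k. Suc k < Suc (Suc n) \<longrightarrow> P k) \<longleftrightarrow> (\<forall>k. Suc k < Suc n \<longrightarrow> P k) \<and> P n" for P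
    by (auto simp: less_Suc_eq)
  from this[of "\<lambda>k. {(q @ [v]) ! k, (q @ [v]) ! Suc k} \<in> E"] show ?thesis
    using False n by (simp add: walk_ok_def nth_append last_conv_nth)
qed (simp add: walk_ok_short)

lemma walk_ok_rev [simp]: "walk_ok E (rev q) \<longleftrightarrow> walk_ok E q"
proof -
  have "walk_ok E (rev q)" if "walk_ok E q" for q :: "nat list"
    unfolding walk_ok_def
  proof (intro allI impI)
    fix k assume k: "Suc k < length (rev q)"
    define m where "m = length q - Suc (Suc k)"
    have "{q ! m, q ! Suc m} \<in> E" using that k unfolding walk_ok_def m_def by simp
    moreover have "rev q ! k = q ! Suc m" "rev q ! Suc k = q ! m"
      using k by (auto simp: rev_nth m_def Suc_diff_Suc)
    ultimately show "{rev q ! k, rev q ! Suc k} \<in> E" by (simp add: insert_commute)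
  qed
  from this[of q] this[of "rev q"] show ?thesis by auto
qed

lemma walk_ok_vertex_in_edge:
  assumes "walk_ok E q" "2 \<le> length q" "v \<in> set q"
  shows "\<exists>e\<in>E. v \<in> e"
proof -
  obtain k where k: "k < length q" "q ! k = v" using assms(3) by (auto simp: in_set_conv_nth)
  show ?thesis
  proof (cases "Suc k < length q")
    case True
    then show ?thesis using assms(1) k unfolding walk_ok_def by blast
  next
    case False
    then have "Suc (k - 1) < length q" "Suc (k - 1) = k" using k assms(2) by auto
    then show ?thesis using assms(1) k unfolding walk_ok_def by (metis insertCI)
  qed
qed

lemma is_path_rev [simp]: "is_path E (rev q) j i \<longleftrightarrow> is_path E q i j"
  unfolding is_path_def by (auto simp: hd_rev last_rev)

lemma is_path_singleton: "is_path E [i] i i"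
  by (simp add: is_path_def walk_ok_short)

lemma is_path_loop: "is_path E q i i \<Longrightarrow> q = [i]"
  unfolding is_path_def
  by (cases q rule: rev_cases) (auto simp: hd_append split: if_splits)

lemma is_path_length_ge_2: "is_path E q i j \<Longrightarrow> i \<noteq> j \<Longrightarrow> 2 \<le> length q"
  unfolding is_path_def by (cases q) (auto simp: Suc_le_eq)

lemma is_path_no_edges: "is_path {} q i j \<longleftrightarrow> q = [i] \<and> j = i"
proof -
  have "walk_ok {} q \<longleftrightarrow> length q \<le> 1"
    unfolding walk_ok_def by (cases q) auto
  then show ?thesis unfolding is_path_def by (cases q) auto
qed

definition unique_paths :: "nat set set \<Rightarrow> bool" where
  "unique_paths E \<longleftrightarrow> (\<forall>q q' i j. is_path E q i j \<longrightarrow> is_path E q' i j \<longrightarrow> q = q')"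

section \<open>Forests and pendant vertices\<close>

lemma forest_edge: "forest L E \<Longrightarrow> e \<in> E \<Longrightarrow> \<exists>u v. e = {u, v} \<and> u \<noteq> v \<and> u < L \<and> v < L"
  unfolding forest_def by blast

lemma forest_Diff: "forest L E \<Longrightarrow> forest L (E - F)"
  unfolding forest_def has_cycle_def by (auto dest: walk_ok_mono[of _ _ E])

lemma forest_vertices: "forest L E \<Longrightarrow> \<Union>E \<subseteq> {..<L}"
  unfolding forest_def by fastforce

lemma forest_finite: "forest L E \<Longrightarrow> finite E"
  by (rule finite_subset[of _ "Pow {..<L}"]) (use forest_vertices in auto)

lemma forest_no_chord:
  assumes "forest L E" "distinct q" "walk_ok E q" "k + 3 \<le> length q" "{last q, q ! k} \<in> E"
  shows False
proof -
  have "has_cycle E"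
    unfolding has_cycle_def
  proof (intro exI conjI)
    show "3 \<le> length (drop k q)" "distinct (drop k q)" "walk_ok E (drop k q)"
      using assms(2-4) by (auto simp: walk_ok_drop)
    show "{last (drop k q), hd (drop k q)} \<in> E"
      using assms(4,5) by (simp add: hd_drop_conv_nth)
  qed
  then show False using assms(1) by (simp add: forest_def)
qed

locale pendant_vertex =
  fixes E :: "nat set set" and l p :: nat
  assumes pendant_edge: "{l, p} \<in> E"
    and leaf_neq: "l \<noteq> p"
    and edge_at_leaf: "\<And>e. e \<in> E \<Longrightarrow> l \<in> e \<Longrightarrow> e = {l, p}"

lemma pendant_vertex_last_of_longest_path:
  assumes F: "forest L E" and q: "distinct q" "walk_ok E q" "2 \<le> length q"
    and longest: "\<And>q'. distinct q' \<Longrightarrow> walk_ok E q' \<Longrightarrow> 2 \<le> length q' \<Longrightarrow> length q' \<le> length q"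
  shows "pendant_vertex E (last q) (q ! (length q - 2))"
proof -
  define n where "n = length q - 2"
  define l where "l = last q"
  define p where "p = q ! n"
  have n: "length q = n + 2" using q(3) unfolding n_def by arith
  moreover have "q \<noteq> []" using q(3) by auto
  ultimately have l: "l = q ! Suc n" by (simp add: l_def last_conv_nth)
  have "{p, l} \<in> E" using q(2) n unfolding walk_ok_def p_def l by simp
  then have "{l, p} \<in> E" by (simp add: insert_commute)
  moreover have "l \<noteq> p" using q(1) n by (simp add: l p_def nth_eq_iff_index_eq)
  moreover have "e = {l, p}" if e: "e \<in> E" "l \<in> e" for e
  proof -
    obtain w where w: "e = {l, w}" "w \<noteq> l" using forest_edge[OF F e(1)] e(2) by auto
    have "w \<in> set q"
    proof (rule ccontr)
      assume "w \<notin> set q"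
      then have "distinct (q @ [w])" "walk_ok E (q @ [w])"
        using q e w by (auto simp: walk_ok_snoc_iff l_def insert_commute)
      then show False using longest[of "q @ [w]"] q(3) by simp
    qed
    then obtain k where k: "k < n + 2" "q ! k = w" by (auto simp: in_set_conv_nth n)
    have "k \<noteq> Suc n" using k w(2) l by auto
    moreover have "\<not> k + 3 \<le> length q"
      using forest_no_chord[OF F q(1,2), of k] e w k by (auto simp: l_def)
    ultimately have "k = n" using k n by linarith
    then show ?thesis using w k p_def by simp
  qed
  ultimately have "pendant_vertex E l p" unfolding pendant_vertex_def by blast
  then show ?thesis by (simp add: l_def p_def n_def)
qed

lemma forest_has_pendant_vertex:
  assumes F: "forest L E" and "E \<noteq> {}"
  shows "\<exists>l p. pendant_vertex E l p"
proof -
  define P where "P q \<longleftrightarrow> distinct q \<and> walk_ok E q \<and> 2 \<le> length q" for q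
  obtain u v where "{u, v} \<in> E" "u \<noteq> v"
    using \<open>E \<noteq> {}\<close> forest_edge[OF F] by blast
  then have "P [u, v]" by (simp add: P_def walk_ok_def)
  moreover have "length q < Suc L" if "P q" for q
  proof -
    have "set q \<subseteq> {..<L}"
      using that forest_vertices[OF F] walk_ok_vertex_in_edge[of E q] by (fastforce simp: P_def)
    then show ?thesis using that card_mono[of "{..<L}" "set q"] by (simp add: P_def distinct_card)
  qed
  ultimately obtain q where "P q" and "\<And>q'. P q' \<Longrightarrow> length q' \<le> length q"
    using ex_has_greatest_nat[of P "[u, v]" length "Suc L"] by blast
  then have "pendant_vertex E (last q) (q ! (length q - 2))"
    by (intro pendant_vertex_last_of_longest_path[OF F]) (auto simp: P_def)
  then show ?thesis by blast
qed

lemma forest_induct [consumes 1, case_names empty pendant]: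
  assumes "forest L E"
    and empty: "P {}"
    and pendant: "\<And>E l p. forest L E \<Longrightarrow> pendant_vertex E l p \<Longrightarrow> P (E - {{l, p}}) \<Longrightarrow> P E"
  shows "P E"
  using assms(1)
proof (induction "card E" arbitrary: E rule: less_induct)
  case less
  show ?case
  proof (cases "E = {}")
    case True
    then show ?thesis using empty by simp
  next
    case False
    then obtain l p where lp: "pendant_vertex E l p"
      using forest_has_pendant_vertex[OF less.prems] by blast
    then have "card (E - {{l, p}}) < card E"
      by (intro card_Diff1_less forest_finite[OF less.prems] pendant_vertex.pendant_edge)
    then have "P (E - {{l, p}})" using less.hyps forest_Diff[OF less.prems] by blast
    then show ?thesis using pendant[OF less.prems lp] by blast
  qed
qed

context pendant_vertex
begin

abbreviation E' :: "nat set set" where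
  "E' \<equiv> E - {{l, p}}"

lemma neighbour_of_leaf: "{w, l} \<in> E \<Longrightarrow> w \<noteq> l \<Longrightarrow> w = p"
  using edge_at_leaf[of "{w, l}"] by (auto simp: doubleton_eq_iff)

lemma leaf_not_inner_vertex:
  assumes q: "is_path E q i j" and "i \<noteq> l" "j \<noteq> l"
  shows "l \<notin> set q"
proof
  assume "l \<in> set q"
  then obtain k where k: "k < length q" "q ! k = l" by (auto simp: in_set_conv_nth)
  have d: "distinct q" and w: "\<And>m. Suc m < length q \<Longrightarrow> {q ! m, q ! Suc m} \<in> E"
    using q by (auto simp: is_path_def walk_ok_def)
  have "q ! 0 = i" "q ! (length q - 1) = j"
    using q by (auto simp: is_path_def hd_conv_nth last_conv_nth)
  then have "k \<noteq> 0" "k \<noteq> length q - 1" using k assms(2,3) by (cases k; auto)+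
  then have k': "Suc (k - 1) = k" "Suc k < length q" using k by auto
  have "{q ! (k - 1), l} \<in> E" "{q ! Suc k, l} \<in> E"
    using w[of "k - 1"] w[of k] k k' by (simp_all add: insert_commute)
  moreover have "q ! (k - 1) \<noteq> l" "q ! Suc k \<noteq> l"
    using nth_eq_iff_index_eq[OF d, of "k - 1" k] nth_eq_iff_index_eq[OF d, of "Suc k" k] k k'
    by auto
  ultimately have "q ! (k - 1) = p" "q ! Suc k = p" by (simp_all add: neighbour_of_leaf)
  then show False using nth_eq_iff_index_eq[OF d, of "k - 1" "Suc k"] k' by simp
qed

lemma leaf_not_on_pruned_path:
  assumes q: "is_path E' q i j" and "i \<noteq> l"
  shows "l \<notin> set q"
proof
  assume l: "l \<in> set q"
  have "i \<noteq> j" using q l \<open>i \<noteq> l\<close> is_path_loop by fastforce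
  then obtain e where "e \<in> E'" "l \<in> e"
    using walk_ok_vertex_in_edge[OF _ is_path_length_ge_2[OF q] l] q by (auto simp: is_path_def)
  then show False using edge_at_leaf by blast
qed

lemma is_path_pruned_iff:
  assumes "i \<noteq> l" "j \<noteq> l"
  shows "is_path E' q i j \<longleftrightarrow> is_path E q i j"
proof
  assume "is_path E q i j"
  moreover from this have "l \<notin> set q" using leaf_not_inner_vertex assms by blast
  moreover have "{q ! k, q ! Suc k} \<noteq> {l, p}" if "Suc k < length q" for k
    using that \<open>l \<notin> set q\<close> nth_mem[of k q] nth_mem[of "Suc k" q] by (auto simp: doubleton_eq_iff)
  ultimately show "is_path E' q i j"
    unfolding is_path_def walk_ok_def by blast
qed (auto simp: is_path_def intro: walk_ok_mono)

lemma is_path_to_leaf_iff: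
  assumes "i \<noteq> l"
  shows "is_path E q i l \<longleftrightarrow> (\<exists>q'. q = q' @ [l] \<and> is_path E' q' i p)"
proof
  assume q: "is_path E q i l"
  define q' where "q' = butlast q"
  have q': "q = q' @ [l]" "q' \<noteq> []"
    using q is_path_length_ge_2[OF q assms] by (auto simp: is_path_def q'_def simp flip: length_0_conv)
  have "{last q', l} \<in> E" "last q' \<noteq> l"
    using q q' by (auto simp: is_path_def walk_ok_snoc_iff)
  then have "last q' = p" by (rule neighbour_of_leaf)
  then have "is_path E q' i p" using q q' by (auto simp: is_path_def walk_ok_snoc_iff)
  then show "\<exists>q'. q = q' @ [l] \<and> is_path E' q' i p"
    using q' is_path_pruned_iff assms leaf_neq by auto
next
  assume "\<exists>q'. q = q' @ [l] \<and> is_path E' q' i p"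
  then obtain q' where q': "q = q' @ [l]" "is_path E' q' i p" by blast
  then have "l \<notin> set q'" using leaf_not_on_pruned_path assms by blast
  then show "is_path E q i l"
    using q' pendant_edge by (auto simp: is_path_def walk_ok_snoc_iff insert_commute intro: walk_ok_mono)
qed

lemma unique_paths_from_pruned:
  assumes u: "unique_paths E'"
  shows "unique_paths E"
proof -
  have from_non_leaf: "q1 = q2" if q: "is_path E q1 i j" "is_path E q2 i j" and "i \<noteq> l" for q1 q2 i j
  proof (cases "j = l")
    case True
    then obtain q1' q2' where "q1 = q1' @ [l]" "is_path E' q1' i p" "q2 = q2' @ [l]" "is_path E' q2' i p"
      using q is_path_to_leaf_iff[OF \<open>i \<noteq> l\<close>] by metis
    then show ?thesis using u unfolding unique_paths_def by blast
  next
    case False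
    then have "is_path E' q1 i j" "is_path E' q2 i j" using q is_path_pruned_iff \<open>i \<noteq> l\<close> by simp_all
    then show ?thesis using u unfolding unique_paths_def by blast
  qed
  show ?thesis
    unfolding unique_paths_def
  proof (intro allI impI)
    fix q1 q2 i j assume q: "is_path E q1 i j" "is_path E q2 i j"
    consider "i \<noteq> l" | "j \<noteq> l" | "i = l" "j = l" by blast
    then show "q1 = q2"
    proof cases
      case 1
      then show ?thesis using q from_non_leaf by blast
    next
      case 2
      then have "rev q1 = rev q2" using q from_non_leaf[of "rev q1" j i "rev q2"] by simp
      then show ?thesis by simp
    next
      case 3
      then show ?thesis using q is_path_loop by blast
    qed
  qed
qed

lemma card_vertices_pruned: "finite (\<Union>E) \<Longrightarrow> card (\<Union>E') < card (\<Union>E)"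
proof (rule psubset_card_mono)
  have "l \<in> \<Union>E" "l \<notin> \<Union>E'" using pendant_edge edge_at_leaf by blast+
  then show "\<Union>E' \<subset> \<Union>E" by blast
qed

end

lemma forest_unique_paths: "forest L E \<Longrightarrow> unique_paths E"
proof (induction rule: forest_induct)
  case empty
  then show ?case by (simp add: unique_paths_def is_path_no_edges)
next
  case (pendant E l p)
  then show ?case using pendant_vertex.unique_paths_from_pruned by blast
qed

section \<open>The mask under removal of a pendant vertex\<close>

lemma path_weight_snoc:
  assumes "q \<noteq> []"
  shows "path_weight W (q @ [v]) = path_weight W q + W {last q, v}"
proof -
  have len: "length (q @ [v]) - 1 = Suc (length q - 1)" using assms by simp
  have "path_weight W (q @ [v]) = (\<Sum>k<length q - 1. W {(q @ [v]) ! k, (q @ [v]) ! Suc k})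
      + W {(q @ [v]) ! (length q - 1), (q @ [v]) ! Suc (length q - 1)}"
    unfolding path_weight_def len by simp
  also have "(\<Sum>k<length q - 1. W {(q @ [v]) ! k, (q @ [v]) ! Suc k}) = path_weight W q"
    unfolding path_weight_def by (intro sum.cong) (auto simp: nth_append)
  also have "(q @ [v]) ! (length q - 1) = last q"
    using assms by (simp add: nth_append last_conv_nth)
  also have "(q @ [v]) ! Suc (length q - 1) = v"
    using assms by (simp add: nth_append)
  finally show ?thesis .
qed

lemma path_weight_rev: "path_weight W (rev q) = path_weight W q"
proof -
  define m where "m = length q - 1"
  define g where "g k = W {q ! k, q ! Suc k}" for k
  have "path_weight W q = (\<Sum>k<m. g (m - Suc k))"
    unfolding path_weight_def g_def m_def by (rule sum.nat_diff_reindex[symmetric])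
  also have "\<dots> = path_weight W (rev q)"
    unfolding path_weight_def
  proof (rule sum.cong)
    fix k assume "k \<in> {..<length (rev q) - 1}"
    then have "rev q ! k = q ! Suc (m - Suc k)" "rev q ! Suc k = q ! (m - Suc k)"
      by (auto simp: rev_nth m_def Suc_diff_Suc)
    then show "g (m - Suc k) = W {rev q ! k, rev q ! Suc k}" by (simp add: g_def insert_commute)
  qed (simp add: m_def)
  finally show ?thesis by simp
qed

lemma mask_eq_path_weight:
  assumes "unique_paths E" "is_path E q i j"
  shows "mask a b E W i j = exp (a * path_weight W q + b)"
proof -
  have "(THE q. is_path E q i j) = q" using assms unfolding unique_paths_def by blast
  then show ?thesis using assms(2) by (auto simp: mask_def fdist_def)
qed

lemma mask_eq_0: "(\<And>q. \<not> is_path E q i j) \<Longrightarrow> mask a b E W i j = 0"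
  by (simp add: mask_def)

lemma mask_diag: "mask a b E W i i = exp b"
proof -
  have "(THE q. is_path E q i i) = [i]" using is_path_singleton is_path_loop by blast
  then show ?thesis using is_path_singleton by (auto simp: mask_def fdist_def path_weight_def)
qed

lemma mask_sym:
  assumes "unique_paths E"
  shows "mask a b E W i j = mask a b E W j i"
proof (cases "\<exists>q. is_path E q i j")
  case True
  then obtain q where "is_path E q i j" by blast
  moreover from this have "is_path E (rev q) j i" by simp
  ultimately show ?thesis
    using mask_eq_path_weight[OF assms] by (metis path_weight_rev)
next
  case False
  then have "\<not> is_path E q j i" for q using is_path_rev[of E q i j] by blast
  then show ?thesis using False by (metis mask_eq_0)
qed

lemma mask_no_edges: "mask a b {} W i j = (if i = j then exp b else 0)"
  by (simp add: mask_diag mask_eq_0 is_path_no_edges)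

lemma mask_mult_cong: "(\<And>j. j < L \<Longrightarrow> x j = y j) \<Longrightarrow> mask_mult a b L E W x i = mask_mult a b L E W y i"
  unfolding mask_mult_def by (rule sum.cong) simp_all

context pendant_vertex
begin

lemma mask_pruned: "i \<noteq> l \<Longrightarrow> j \<noteq> l \<Longrightarrow> mask a b E' W i j = mask a b E W i j"
  unfolding mask_def fdist_def by (simp add: is_path_pruned_iff)

lemma mask_pruned_to_leaf: "i \<noteq> l \<Longrightarrow> mask a b E' W i l = 0"
  using leaf_not_on_pruned_path by (metis mask_eq_0 is_path_def last_in_set)

context
  fixes a b :: real and W :: "nat set \<Rightarrow> real"
  assumes unique: "unique_paths E" "unique_paths E'"
begin

lemma mask_to_leaf:
  assumes "i \<noteq> l"
  shows "mask a b E W i l = exp (a * W {l, p}) * mask a b E' W i p"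
proof (cases "\<exists>q. is_path E' q i p")
  case True
  then obtain q where q: "is_path E' q i p" by blast
  then have "is_path E (q @ [l]) i l" using is_path_to_leaf_iff assms by blast
  then have "mask a b E W i l = exp (a * path_weight W (q @ [l]) + b)"
    by (rule mask_eq_path_weight[OF unique(1)])
  also have "\<dots> = exp (a * W {l, p}) * exp (a * path_weight W q + b)"
    using q by (simp add: is_path_def path_weight_snoc insert_commute algebra_simps flip: exp_add)
  also have "exp (a * path_weight W q + b) = mask a b E' W i p"
    using mask_eq_path_weight[OF unique(2) q] by simp
  finally show ?thesis .
next
  case False
  then show ?thesis using is_path_to_leaf_iff[OF assms] by (simp add: mask_eq_0)
qed

lemma mask_from_leaf: "j \<noteq> l \<Longrightarrow> mask a b E W l j = exp (a * W {l, p}) * mask a b E' W p j"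
  using mask_to_leaf mask_sym unique by metis

end

context
  fixes L :: nat
  assumes forest: "forest L E"
begin

lemma leaf_less: "l < L" "p < L"
  using forest_edge[OF forest pendant_edge] by (auto simp: doubleton_eq_iff)

lemma unique_paths_E_E': "unique_paths E" "unique_paths E'"
  using forest forest_Diff by (blast intro: forest_unique_paths)+

lemma mask_mult_pruned:
  fixes a b :: real and W :: "nat set \<Rightarrow> real" and x x' :: "nat \<Rightarrow> real" and c :: real
  defines "c \<equiv> exp (a * W {l, p})" and "x' \<equiv> x(p := x p + c * x l)"
  assumes "i \<noteq> l"
  shows "mask_mult a b L E W x i = mask_mult a b L E' W x' i"
proof -
  let ?M = "mask a b E W" and ?M' = "mask a b E' W"
  have "?M i j * x j = ?M' i j * x j + (if j = l then c * ?M' i p * x l else 0)" for j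
    using assms mask_to_leaf[OF unique_paths_E_E'] mask_pruned_to_leaf mask_pruned by simp
  moreover have "?M' i j * x' j = ?M' i j * x j + (if j = p then c * ?M' i p * x l else 0)" for j
    by (simp add: x'_def algebra_simps)
  ultimately show ?thesis
    using leaf_less by (simp add: mask_mult_def sum.distrib)
qed

lemma mask_mult_at_leaf:
  fixes a b :: real and W :: "nat set \<Rightarrow> real" and x x' :: "nat \<Rightarrow> real" and c :: real
  defines "c \<equiv> exp (a * W {l, p})" and "x' \<equiv> x(p := x p + c * x l)"
  shows "mask_mult a b L E W x l = c * mask_mult a b L E' W x' p + exp b * (1 - c\<^sup>2) * x l"
proof -
  let ?M = "mask a b E W" and ?M' = "mask a b E' W"
  have "?M l j * x j = c * (?M' p j * x j) + (if j = l then exp b * x l else 0)" for j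
    using assms mask_from_leaf[OF unique_paths_E_E'] mask_pruned_to_leaf[of p] leaf_neq
    by (simp add: mask_diag)
  moreover have "?M' p j * x' j = ?M' p j * x j + (if j = p then c * exp b * x l else 0)" for j
    by (simp add: x'_def mask_diag algebra_simps)
  ultimately show ?thesis
    using leaf_less by (simp add: mask_mult_def sum.distrib sum_distrib_left power2_eq_square algebra_simps)
qed

end

end

section \<open>Straight-line programs for the mask\<close>

definition exec_from :: "instr list \<Rightarrow> (nat \<Rightarrow> real) \<Rightarrow> (nat set \<Rightarrow> real) \<Rightarrow> real list \<Rightarrow> real list" where
  "exec_from P x W rs = foldl (\<lambda>rs ins. rs @ [exec_instr x W rs ins]) rs P"

lemma run_eq_exec_from: "run P x W = exec_from P x W []"
  by (simp add: run_def exec_from_def)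

lemma exec_from_Nil [simp]: "exec_from [] x W rs = rs"
  by (simp add: exec_from_def)

lemma exec_from_Cons [simp]:
  "exec_from (ins # P) x W rs = exec_from P x W (rs @ [exec_instr x W rs ins])"
  by (simp add: exec_from_def)

lemma exec_from_append [simp]: "exec_from (P @ Q) x W rs = exec_from Q x W (exec_from P x W rs)"
  by (simp add: exec_from_def)

lemma exec_from_extends: "\<exists>ys. exec_from P x W rs = rs @ ys"
proof (induction P arbitrary: rs)
  case (Cons ins P)
  then obtain ys where "exec_from P x W (rs @ [exec_instr x W rs ins]) = (rs @ [exec_instr x W rs ins]) @ ys"
    by blast
  then show ?case by auto
qed simp

lemma length_exec_from [simp]: "length (exec_from P x W rs) = length rs + length P"
  by (induction P arbitrary: rs) simp_all

lemma reg_append: "reg (xs @ ys) k = (if k < length xs then reg xs k else reg ys (k - length xs))"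
  unfolding reg_def by (auto simp: nth_append)

lemma reg_snoc: "reg (xs @ [v]) (length xs) = v"
  by (simp add: reg_def)

lemma reg_Cons: "reg (v # ys) k = (if k = 0 then v else reg ys (k - 1))"
  unfolding reg_def by (cases k) auto

lemma reg_exec_from_old: "k < length rs \<Longrightarrow> reg (exec_from P x W rs) k = reg rs k"
  using exec_from_extends[of P x W rs] by (auto simp: reg_append)

lemma reg_exec_from_new:
  assumes "k < length P"
  shows "reg (exec_from P x W rs) (length rs + k) = exec_instr x W (exec_from (take k P) x W rs) (P ! k)"
proof -
  let ?rs = "exec_from (take k P) x W rs"
  let ?v = "exec_instr x W ?rs (P ! k)"
  have len: "length ?rs = length rs + k" using assms by simp
  have "exec_from P x W rs = exec_from (take k P @ P ! k # drop (Suc k) P) x W rs"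
    using id_take_nth_drop[OF assms] by (rule arg_cong)
  also have "\<dots> = exec_from (drop (Suc k) P) x W (?rs @ [?v])"
    by simp
  finally have "reg (exec_from P x W rs) (length rs + k) = reg (?rs @ [?v]) (length rs + k)"
    using len by (simp add: reg_exec_from_old)
  also have "\<dots> = ?v"
    using reg_snoc[of ?rs ?v] by (simp only: len)
  finally show ?thesis .
qed

text \<open>Relocatable programs: \<open>Q\<close> runs after \<open>n\<close> registers have been written and reads input \<open>j\<close>
  from register \<open>inp j\<close>. The induction needs this because the program for the pruned forest runs
  after the prologue and reads \<open>x\<^sub>p + c x\<^sub>l\<close> from a fresh register.\<close>

definition computes_mask_mult_from ::
  "real \<Rightarrow> real \<Rightarrow> nat \<Rightarrow> nat set set \<Rightarrow> nat \<Rightarrow> (nat \<Rightarrow> nat) \<Rightarrow> instr list \<Rightarrow> nat list \<Rightarrow> bool" where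
  "computes_mask_mult_from a b L E n inp Q outs \<longleftrightarrow>
     length outs = L \<and> (\<forall>i<L. outs ! i < n + length Q) \<and>
     (\<forall>x W rs. length rs = n \<longrightarrow>
        (\<forall>i<L. reg (exec_from Q x W rs) (outs ! i) = mask_mult a b L E W (\<lambda>j. reg rs (inp j)) i))"

lemma computes_mask_mult_from_no_edges:
  assumes "\<forall>j<L. inp j < n"
  shows "computes_mask_mult_from a b L {} n inp
    (Const (exp b) # map (\<lambda>j. Mul n (inp j)) [0..<L]) (map (\<lambda>i. Suc n + i) [0..<L])"
  unfolding computes_mask_mult_from_def
proof (intro conjI allI impI)
  fix x :: "nat \<Rightarrow> real" and W :: "nat set \<Rightarrow> real" and rs :: "real list" and i
  assume rs: "length rs = n" and i: "i < L"
  define Ms where "Ms = map (\<lambda>j. Mul n (inp j)) [0..<L]"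
  define S where "S = exec_from (take i Ms) x W (rs @ [exp b])"
  have "reg (exec_from Ms x W (rs @ [exp b])) (Suc n + i) = reg S n * reg S (inp i)"
    using reg_exec_from_new[of i Ms x W "rs @ [exp b]"] i rs by (simp add: Ms_def S_def)
  also have "reg S n = exp b"
    using reg_exec_from_old[of n "rs @ [exp b]" "take i Ms" x W] reg_snoc[of rs "exp b"] rs
    by (simp add: S_def)
  also have "reg S (inp i) = reg rs (inp i)"
    using reg_exec_from_old[of "inp i" "rs @ [exp b]" "take i Ms" x W] assms i rs
    by (simp add: S_def reg_append less_SucI)
  also have "exp b * reg rs (inp i) = (\<Sum>j<L. if j = i then exp b * reg rs (inp j) else 0)"
    using i by simp
  also have "\<dots> = mask_mult a b L {} W (\<lambda>j. reg rs (inp j)) i"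
    unfolding mask_mult_def by (rule sum.cong) (auto simp: mask_no_edges)
  finally show "reg (exec_from (Const (exp b) # Ms) x W rs) (map (\<lambda>i. Suc n + i) [0..<L] ! i)
      = mask_mult a b L {} W (\<lambda>j. reg rs (inp j)) i"
    using i by simp
qed auto

definition leaf_prologue :: "real \<Rightarrow> nat \<Rightarrow> (nat \<Rightarrow> nat) \<Rightarrow> nat \<Rightarrow> nat \<Rightarrow> instr list" where
  "leaf_prologue a n inp l p =
    [InW {l, p}, Const a, Mul (n + 1) n, Ex (n + 2), Mul (n + 3) (inp l), Add (inp p) (n + 4)]"

lemma exec_from_leaf_prologue:
  assumes "length rs = n" "inp l < n" "inp p < n"
  shows "exec_from (leaf_prologue a n inp l p) x W rs = rs @
    [W {l, p}, a, a * W {l, p}, exp (a * W {l, p}), exp (a * W {l, p}) * reg rs (inp l),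
     reg rs (inp p) + exp (a * W {l, p}) * reg rs (inp l)]"
  using assms by (simp add: leaf_prologue_def reg_append reg_Cons)

definition leaf_epilogue :: "real \<Rightarrow> nat \<Rightarrow> nat \<Rightarrow> nat \<Rightarrow> nat \<Rightarrow> instr list" where
  "leaf_epilogue b n k_l k_p m =
    [Mul (n + 3) k_p, Mul (n + 3) (n + 4), Sub k_l (m + 1), Const (exp b), Mul (m + 3) (m + 2), Add m (m + 4)]"

lemma reg_exec_from_leaf_epilogue:
  assumes "length rs = m" "n + 4 < m" "k_l < m" "k_p < m"
  shows "reg (exec_from (leaf_epilogue b n k_l k_p m) x W rs) (m + 5) =
    reg rs (n + 3) * reg rs k_p + exp b * (reg rs k_l - reg rs (n + 3) * reg rs (n + 4))"
  using assms by (simp add: leaf_epilogue_def reg_append reg_Cons)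

lemma (in pendant_vertex) computes_mask_mult_from_pendant:
  assumes forest: "forest L E" and inp: "\<forall>j<L. inp j < n"
    and Q': "computes_mask_mult_from a b L E' (n + 6) (inp(p := n + 5)) Q' outs'"
  defines "m \<equiv> n + 6 + length Q'"
  shows "computes_mask_mult_from a b L E n inp
    (leaf_prologue a n inp l p @ Q' @ leaf_epilogue b n (inp l) (outs' ! p) m) (outs'[l := m + 5])"
  unfolding computes_mask_mult_from_def
proof (intro conjI allI impI)
  have outs': "length outs' = L" "\<forall>i<L. outs' ! i < m"
    using Q' by (auto simp: computes_mask_mult_from_def m_def)
  have lp: "l < L" "p < L" "inp l < n" "inp p < n" using leaf_less[OF forest] inp by auto
  fix x :: "nat \<Rightarrow> real" and W :: "nat set \<Rightarrow> real" and rs :: "real list" and i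
  assume rs: "length rs = n" and i: "i < L"
  define c where "c = exp (a * W {l, p})"
  define X where "X = (\<lambda>j. reg rs (inp j))"
  define X' where "X' = X(p := X p + c * X l)"
  define rs1 where "rs1 = exec_from (leaf_prologue a n inp l p) x W rs"
  define rs2 where "rs2 = exec_from Q' x W rs1"
  have rs1: "rs1 = rs @ [W {l, p}, a, a * W {l, p}, c, c * X l, X p + c * X l]"
    unfolding rs1_def c_def X_def using rs lp(3,4) by (rule exec_from_leaf_prologue)
  have "reg rs1 ((inp(p := n + 5)) j) = X' j" if "j < L" for j
    using that inp rs by (auto simp: rs1 X'_def X_def reg_append reg_Cons)
  then have y': "reg rs2 (outs' ! j) = mask_mult a b L E' W X' j" if "j < L" for j
    using Q' that rs by (auto simp: computes_mask_mult_from_def rs1 rs2_def intro: mask_mult_cong)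
  have rs2: "length rs2 = m" "reg rs2 (n + 3) = c" "reg rs2 (n + 4) = c * X l" "reg rs2 (inp l) = X l"
    using rs lp by (simp_all add: rs2_def m_def reg_exec_from_old rs1 reg_append reg_Cons X_def)
  show "reg (exec_from (leaf_prologue a n inp l p @ Q' @ leaf_epilogue b n (inp l) (outs' ! p) m) x W rs)
      (outs'[l := m + 5] ! i) = mask_mult a b L E W X i"
  proof (cases "i = l")
    case True
    have "reg (exec_from (leaf_epilogue b n (inp l) (outs' ! p) m) x W rs2) (m + 5)
        = c * mask_mult a b L E' W X' p + exp b * (X l - c * (c * X l))"
      using reg_exec_from_leaf_epilogue[OF rs2(1)] rs2 y'[of p] lp outs' by (simp add: m_def)
    also have "\<dots> = mask_mult a b L E W X l"
      using mask_mult_at_leaf[OF forest, of a b W X, folded c_def, folded X'_def]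
      by (simp add: power2_eq_square algebra_simps)
    finally show ?thesis using True lp outs' by (simp add: rs1_def rs2_def)
  next
    case False
    then show ?thesis
      using mask_mult_pruned[OF forest False, of a b W X, folded c_def, folded X'_def] y'[OF i] i outs' rs2
      by (simp add: rs1_def[symmetric] rs2_def[symmetric] reg_exec_from_old)
  qed
qed (use Q' leaf_less[OF forest] in
    \<open>auto simp: computes_mask_mult_from_def nth_list_update leaf_prologue_def leaf_epilogue_def m_def\<close>)

lemma forest_computes_mask_mult_from:
  assumes "forest L E" "\<forall>j<L. inp j < n"
  shows "\<exists>Q outs. length Q \<le> L + 1 + 12 * card (\<Union>E) \<and> computes_mask_mult_from a b L E n inp Q outs"
  using assms
proof (induction E arbitrary: n inp rule: forest_induct)
  case empty
  let ?Q = "Const (exp b) # map (\<lambda>j. Mul n (inp j)) [0..<L]"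
  have "length ?Q \<le> L + 1 + 12 * card (\<Union>{})" by simp
  then show ?case using computes_mask_mult_from_no_edges[OF empty] by blast
next
  case (pendant E l p)
  interpret pendant_vertex E l p by fact
  have "\<forall>j<L. (inp(p := n + 5)) j < n + 6" using pendant.prems by (auto intro: trans_less_add1)
  then obtain Q' outs' where Q': "length Q' \<le> L + 1 + 12 * card (\<Union>E')"
      "computes_mask_mult_from a b L E' (n + 6) (inp(p := n + 5)) Q' outs'"
    using pendant.IH by blast
  let ?m = "n + 6 + length Q'"
  let ?Q = "leaf_prologue a n inp l p @ Q' @ leaf_epilogue b n (inp l) (outs' ! p) ?m"
  have "computes_mask_mult_from a b L E n inp ?Q (outs'[l := ?m + 5])"
    using computes_mask_mult_from_pendant[OF pendant.hyps(1) pendant.prems Q'(2)] .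
  moreover have "card (\<Union>E') < card (\<Union>E)"
    using card_vertices_pruned finite_subset[OF forest_vertices[OF pendant.hyps(1)]] by blast
  then have "length ?Q \<le> L + 1 + 12 * card (\<Union>E)"
    using Q'(1) by (simp add: leaf_prologue_def leaf_epilogue_def)
  ultimately show ?case by blast
qed

lemma exec_from_load_inputs: "exec_from (map InX [0..<L]) x W [] = map x [0..<L]"
  by (induction L) simp_all

lemma computes_mask_mult_load_inputs:
  assumes "computes_mask_mult_from a b L E L id Q outs"
  shows "computes_mask_mult a b L E (map InX [0..<L] @ Q) outs"
  unfolding computes_mask_mult_def
proof (intro conjI allI impI)
  show "length outs = L" using assms by (simp add: computes_mask_mult_from_def)
next
  fix W x i assume "i < L"
  then have "reg (exec_from Q x W (map x [0..<L])) (outs ! i)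
      = mask_mult a b L E W (\<lambda>j. reg (map x [0..<L]) j) i"
    using assms by (simp add: computes_mask_mult_from_def)
  also have "\<dots> = mask_mult a b L E W x i"
    by (rule mask_mult_cong) (simp add: reg_def)
  finally show "reg (run (map InX [0..<L] @ Q) x W) (outs ! i) = mask_mult a b L E W x i"
    by (simp add: run_eq_exec_from exec_from_load_inputs)
qed

theorem lemma3p5:
  fixes a b :: real
  shows "\<exists>C::nat. \<forall>L E. forest L E \<longrightarrow>
           (\<exists>P outs. length P \<le> C * L \<and> computes_mask_mult a b L E P outs)"
proof (intro exI[of _ 16] allI impI)
  fix L E assume F: "forest L E"
  show "\<exists>P outs. length P \<le> 16 * L \<and> computes_mask_mult a b L E P outs"
  proof (cases "L = 0")
    case True
    then have "computes_mask_mult a b L E [] []" by (simp add: computes_mask_mult_def)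
    then show ?thesis by (intro exI[of _ "[]"]) auto
  next
    case False
    obtain Q outs where Q: "length Q \<le> L + 1 + 12 * card (\<Union>E)"
        "computes_mask_mult_from a b L E L id Q outs"
      using forest_computes_mask_mult_from[OF F, where n = L and inp = id, of a b] by auto
    have "card (\<Union>E) \<le> L" using card_mono[OF _ forest_vertices[OF F]] by simp
    then have "length (map InX [0..<L] @ Q) \<le> 16 * L" using Q(1) False by simp
    then show ?thesis using computes_mask_mult_load_inputs[OF Q(2)] by blast
  qed
qed

end
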